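(* For integers $n,k,r\ge1$ define \[ Q_{n,k,r}=\sum_{(m_\ell)}\ \prod_{\ell\ge1}\Bigl(\frac{a_\ell}{\ell!}\Bigr)^{m_\ell}\frac{1}{m_\ell!}, \] the sum over all sequences $(m_\ell)_{\ell\ge1}$ of non-negative integers with $\sum_\ell \ell m_\ell=n$, $\sum_\ell m_\ell=k$ and $m_\ell=0$ for all $\ell>r$, and let $F_r(s)=\sum_{\ell=1}^r \frac{a_\ell s^\ell}{\ell!}$. Then: (i) for all $n,k,r\ge1$, \[ Q_{n,k,r}\le\frac1{k!}\inf_{s>0}\frac{F_r(s)^k}{s^n}; \] (ii) for each $\eta>0$ there exist $n_0<\infty$ and positive numbers $(c_r)_{r\ge1}$ such that \[ Q_{n,k,r}\ge\frac{c_r}{\sqrt n}\,\frac1{k!}\inf_{s>0}\frac{F_r(s)^k}{s^n} \] for all $n\ge n_0$, all $k\ge1$ and all $r\ge2$ satisfying $k<(1-\eta)n$ and $rk>n(1+\eta)$.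
   Context: $a_\ell$ denotes the number of labeled trees on $\ell$ vertices (so $a_\ell=\ell^{\ell-2}$). *)

theory Defs
  imports Complex_Main
begin

text \<open>Number of labelled trees on l vertices: a_l = l^(l-2) (with a_1 = 1).\<close>
definition trees :: "nat \<Rightarrow> real" where
  "trees l = real l ^ (l - 2)"

definition seqs :: "nat \<Rightarrow> nat \<Rightarrow> nat \<Rightarrow> (nat \<Rightarrow> nat) set" where
  "seqs n k r = {m. (\<forall>l. m l \<noteq> 0 \<longrightarrow> 1 \<le> l \<and> l \<le> r)
                   \<and> (\<Sum>l=1..r. l * m l) = n \<and> (\<Sum>l=1..r. m l) = k}"

definition Q :: "nat \<Rightarrow> nat \<Rightarrow> nat \<Rightarrow> real" where
  "Q n k r = (\<Sum>m\<in>seqs n k r. \<Prod>l=1..r. (trees l / fact l) ^ m l / fact (m l))"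

definition F :: "nat \<Rightarrow> real \<Rightarrow> real" where
  "F r s = (\<Sum>l=1..r. trees l * s ^ l / fact l)"

definition bound :: "nat \<Rightarrow> nat \<Rightarrow> nat \<Rightarrow> real" where
  "bound n k r = (1 / fact k) * (INF s\<in>{0<..}. F r s ^ k / s ^ n)"

end

theory Submission
  imports Defs
begin

text \<open>For \<open>s > 0\<close> the weights \<open>q\<^sub>l = a\<^sub>l s\<^sup>l / (l! F\<^sub>r(s))\<close>, \<open>1 \<le> l \<le> r\<close>,
  form a probability distribution on tree sizes, and \<open>k! s\<^sup>n Q(n, k, r) / F\<^sub>r(s)\<^sup>k\<close> is
  the probability that the multinomial vector \<open>m\<close> of size counts of \<open>k\<close> independent
  \<open>q\<close>-distributed sizes has total size \<open>\<Sum>\<^sub>l l m\<^sub>l = n\<close>. Part (i) says that this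
  probability is at most 1.

  For part (ii) take the saddle point \<open>s\<close> at which the expected total size equals \<open>n\<close>.
  By Chebyshev's inequality, with probability at least 1/4 the total lies within
  \<open>T \<approx> 2 r \<surd>k\<close> of \<open>n\<close> while \<open>m\<^sub>1\<close> and \<open>m\<^sub>2\<close> lie within \<open>2 \<surd>k\<close> of their means. Moving
  \<open>t \<le> T\<close> units between \<open>m\<^sub>1\<close> and \<open>m\<^sub>2\<close> changes the total by \<open>t\<close>, is injective, and
  costs at most the factor \<open>exp (-16 r (r + 1) / \<delta>)\<close>, where \<open>\<delta>\<close> bounds \<open>q\<^sub>1\<close> and \<open>q\<^sub>2\<close>
  from below. Hence each of the \<open>2 T + 1\<close> possible totals is at most a constant times as
  likely as \<open>n\<close>, which gives a lower bound of order \<open>1 / \<surd>k\<close>. All saddle points for the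
  admissible \<open>n, k\<close> lie in one compact interval, so \<open>\<delta>\<close> depends on \<open>r\<close> only; bounded
  \<open>k\<close> are handled by a single term of \<open>Q\<close> at \<open>s = 1\<close>.\<close>

section \<open>Weak compositions and multinomial probabilities\<close>

definition weak_comps :: "nat \<Rightarrow> nat \<Rightarrow> (nat \<Rightarrow> nat) set" where
  "weak_comps k r = {m. (\<forall>l. m l \<noteq> 0 \<longrightarrow> 1 \<le> l \<and> l \<le> r) \<and> (\<Sum>l=1..r. m l) = k}"

definition multinomial_prob :: "(nat \<Rightarrow> real) \<Rightarrow> nat \<Rightarrow> nat \<Rightarrow> (nat \<Rightarrow> nat) \<Rightarrow> real" where
  "multinomial_prob q k r m = fact k * (\<Prod>l=1..r. q l ^ m l / fact (m l))"

abbreviation total_size :: "nat \<Rightarrow> (nat \<Rightarrow> nat) \<Rightarrow> nat" where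
  "total_size r m \<equiv> \<Sum>l=1..r. l * m l"

lemma seqs_eq: "seqs n k r = {m \<in> weak_comps k r. total_size r m = n}"
  by (auto simp: seqs_def weak_comps_def)

lemma finite_weak_comps: "finite (weak_comps k r)"
proof (rule finite_subset)
  show "weak_comps k r \<subseteq> {m. \<forall>l. (l \<in> {1..r} \<longrightarrow> m l \<in> {0..k}) \<and> (l \<notin> {1..r} \<longrightarrow> m l = 0)}"
  proof safe
    fix m l assume "m \<in> weak_comps k r" "l \<in> {1..r}"
    then show "m l \<in> {0..k}"
      using member_le_sum[of l "{1..r}" m] by (auto simp: weak_comps_def)
  qed (auto simp: weak_comps_def)
qed (intro finite_set_of_finite_funs; simp)

lemma finite_seqs: "finite (seqs n k r)"
  using finite_weak_comps by (simp add: seqs_eq)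

lemma weak_comps_0: "weak_comps 0 r = {\<lambda>_. 0}"
proof (intro equalityI subsetI)
  fix m assume "m \<in> weak_comps 0 r"
  then have support: "m l \<noteq> 0 \<Longrightarrow> 1 \<le> l \<and> l \<le> r" and zero: "sum m {1..r} = 0" for l
    unfolding weak_comps_def mem_Collect_eq by blast+
  have "m l = 0" for l
    using support[of l] zero by (metis atLeastAtMost_iff finite_atLeastAtMost sum_eq_0_iff)
  then show "m \<in> {\<lambda>_. 0}"
    by auto
qed (simp add: weak_comps_def)

lemma sum_fun_upd_add:
  fixes g :: "'a \<Rightarrow> 'b::comm_monoid_add"
  assumes "finite A" "x \<in> A"
  shows "sum (g(x := v)) A + g x = sum g A + v"
proof -
  have "sum (g(x := v)) A = v + sum g (A - {x})" and "sum g A = g x + sum g (A - {x})"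
    using assms by (simp_all add: sum.remove)
  then show ?thesis by (simp add: ac_simps)
qed

lemma bij_betw_increment:
  assumes "l \<in> {1..r}"
  shows "bij_betw (\<lambda>m. m(l := m l + 1)) (weak_comps k r) {m \<in> weak_comps (Suc k) r. 1 \<le> m l}"
proof (rule bij_betw_byWitness[where f' = "\<lambda>m. m(l := m l - 1)"])
  have sum_upd: "(\<Sum>i=1..r. (m(l := v)) i) + m l = (\<Sum>i=1..r. m i) + v" for m :: "nat \<Rightarrow> nat" and v
    using sum_fun_upd_add[of "{1..r}" l m v] assms by simp
  show "(\<lambda>m. m(l := m l + 1)) ` weak_comps k r \<subseteq> {m \<in> weak_comps (Suc k) r. 1 \<le> m l}"
  proof (rule image_subsetI)
    fix m assume "m \<in> weak_comps k r"
    then show "m(l := m l + 1) \<in> {m \<in> weak_comps (Suc k) r. 1 \<le> m l}"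
      using assms sum_upd[of m "m l + 1"] by (auto simp: weak_comps_def)
  qed
  show "(\<lambda>m. m(l := m l - 1)) ` {m \<in> weak_comps (Suc k) r. 1 \<le> m l} \<subseteq> weak_comps k r"
  proof (rule image_subsetI)
    fix m assume "m \<in> {m \<in> weak_comps (Suc k) r. 1 \<le> m l}"
    then show "m(l := m l - 1) \<in> weak_comps k r"
      using assms sum_upd[of m "m l - 1"] by (auto simp: weak_comps_def)
  qed
qed auto

lemma total_size_increment:
  assumes "l \<in> {1..r}"
  shows "total_size r (m(l := m l + 1)) = total_size r m + l"
proof -
  have upd: "(\<lambda>i. i * (m(l := m l + 1)) i) = (\<lambda>i. i * m i)(l := l * m l + l)"
    by auto
  have "total_size r (m(l := m l + 1)) + l * m l = total_size r m + (l * m l + l)"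
    unfolding upd using assms by (intro sum_fun_upd_add) auto
  then show ?thesis
    by simp
qed

lemma seqs_nonempty:
  assumes "1 \<le> r" "k \<le> n" "n \<le> r * k"
  shows "seqs n k r \<noteq> {}"
  using assms(2,3)
proof (induction k arbitrary: n)
  case 0
  then have "(\<lambda>_. 0) \<in> seqs n 0 r"
    by (simp add: seqs_eq weak_comps_0)
  then show ?case
    by blast
next
  case (Suc k)
  define l where "l = min r (n - k)"
  have l: "l \<in> {1..r}" "l \<le> n"
    using Suc.prems assms(1) by (auto simp: l_def)
  have "k \<le> n - l" "n - l \<le> r * k"
    using Suc.prems by (auto simp: l_def min_def)
  then obtain m where m: "m \<in> seqs (n - l) k r"
    using Suc.IH by blast
  then have "m \<in> weak_comps k r" "total_size r m = n - l"
    by (simp_all add: seqs_eq)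
  then have "m(l := m l + 1) \<in> weak_comps (Suc k) r" "total_size r (m(l := m l + 1)) = n"
    using bij_betw_apply[OF bij_betw_increment[OF l(1)]] total_size_increment[OF l(1)] l(2)
    by auto
  then show ?case
    unfolding seqs_eq by blast
qed

lemma multinomial_prob_increment:
  fixes q :: "nat \<Rightarrow> real"
  assumes "l \<in> {1..r}"
  shows "multinomial_prob q (Suc k) r (m(l := m l + 1)) * real (m l + 1)
           = real (Suc k) * q l * multinomial_prob q k r m"
proof -
  have split: "(\<Prod>i=1..r. g i) = g l * (\<Prod>i\<in>{1..r}-{l}. g i)" for g :: "nat \<Rightarrow> real"
    using assms by (simp add: prod.remove)
  have rest: "(\<Prod>i\<in>{1..r}-{l}. q i ^ (m(l := m l + 1)) i / fact ((m(l := m l + 1)) i))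
              = (\<Prod>i\<in>{1..r}-{l}. q i ^ m i / fact (m i))"
    by (rule prod.cong) auto
  show ?thesis
    unfolding multinomial_prob_def
    by (subst (1 2) split) (simp add: rest fact_Suc del: of_nat_Suc)
qed

lemma multinomial_moment_shift:
  fixes q :: "nat \<Rightarrow> real"
  assumes "l \<in> {1..r}"
  shows "(\<Sum>m\<in>weak_comps (Suc k) r. multinomial_prob q (Suc k) r m * real (m l) * h m)
       = real (Suc k) * q l * (\<Sum>m\<in>weak_comps k r. multinomial_prob q k r m * h (m(l := m l + 1)))"
proof -
  have "(\<Sum>m\<in>weak_comps (Suc k) r. multinomial_prob q (Suc k) r m * real (m l) * h m)
      = (\<Sum>m\<in>{m \<in> weak_comps (Suc k) r. 1 \<le> m l}. multinomial_prob q (Suc k) r m * real (m l) * h m)"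
    by (rule sum.mono_neutral_right) (auto simp: finite_weak_comps)
  also have "\<dots> = (\<Sum>m\<in>weak_comps k r.
                     multinomial_prob q (Suc k) r (m(l := m l + 1)) * real (m l + 1) * h (m(l := m l + 1)))"
    using sum.reindex_bij_betw[OF bij_betw_increment[OF assms],
        of "\<lambda>m. multinomial_prob q (Suc k) r m * real (m l) * h m", symmetric]
    by simp
  also have "\<dots> = (\<Sum>m\<in>weak_comps k r. real (Suc k) * q l * (multinomial_prob q k r m * h (m(l := m l + 1))))"
    by (rule sum.cong) (simp_all only: multinomial_prob_increment[OF assms] mult.assoc)
  finally show ?thesis
    by (simp add: sum_distrib_left)
qed

definition transfer :: "nat \<Rightarrow> nat \<Rightarrow> nat \<Rightarrow> (nat \<Rightarrow> nat) \<Rightarrow> nat \<Rightarrow> nat" where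
  "transfer a b t m = m(a := m a - t, b := m b + t)"

lemma transfer_inverse: "a \<noteq> b \<Longrightarrow> t \<le> m a \<Longrightarrow> transfer b a t (transfer a b t m) = m"
  by (auto simp: transfer_def fun_eq_iff)

lemma inj_on_transfer: "a \<noteq> b \<Longrightarrow> inj_on (transfer a b t) {m. t \<le> m a}"
  by (rule inj_on_inverseI[where g = "transfer b a t"]) (simp add: transfer_inverse)

lemma sum_transfer:
  fixes w :: "nat \<Rightarrow> nat"
  assumes "finite A" "a \<in> A" "b \<in> A" "a \<noteq> b" "t \<le> m a"
  shows "(\<Sum>l\<in>A. w l * transfer a b t m l) + w a * t = (\<Sum>l\<in>A. w l * m l) + w b * t"
proof -
  define g where "g l = w l * m l" for l
  define h where "h = g(a := w a * (m a - t))"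
  have upd: "(\<lambda>l. w l * transfer a b t m l) = h(b := w b * m b + w b * t)"
    using assms(4) by (auto simp: transfer_def h_def g_def fun_eq_iff add_mult_distrib2)
  have "(\<Sum>l\<in>A. w l * transfer a b t m l) + h b = sum h A + (w b * m b + w b * t)"
    using assms(1,3) unfolding upd by (rule sum_fun_upd_add)
  moreover have "sum h A + g a = sum g A + w a * (m a - t)"
    using assms(1,2) unfolding h_def by (rule sum_fun_upd_add)
  moreover have "h b = w b * m b" "g a = w a * (m a - t) + w a * t"
    using assms(4,5) by (simp_all add: h_def g_def add_mult_distrib2[symmetric])
  ultimately show ?thesis
    unfolding g_def by linarith
qed

lemma transfer_in_weak_comps:
  assumes "a \<in> {1..r}" "b \<in> {1..r}" "a \<noteq> b" "t \<le> m a" "m \<in> weak_comps k r"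
  shows "transfer a b t m \<in> weak_comps k r"
  using assms sum_transfer[of "{1..r}" a b t m "\<lambda>_. 1"]
  by (auto simp: weak_comps_def transfer_def)

lemma total_size_transfer:
  assumes "a \<in> {1..r}" "b \<in> {1..r}" "a \<noteq> b" "t \<le> m a"
  shows "total_size r (transfer a b t m) + a * t = total_size r m + b * t"
  using sum_transfer[of "{1..r}" a b t m id] assms by simp

lemma sum_union_le:
  fixes f :: "'a \<Rightarrow> real"
  assumes "finite A" "finite B" "\<And>x. x \<in> A \<inter> B \<Longrightarrow> 0 \<le> f x"
  shows "sum f (A \<union> B) \<le> sum f A + sum f B"
proof -
  have "0 \<le> sum f (A \<inter> B)"
    using assms(3) by (intro sum_nonneg) auto
  then show ?thesis
    using assms(1,2) by (simp add: sum_Un)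
qed

lemma chebyshev_sum:
  fixes p f :: "'a \<Rightarrow> real"
  assumes "finite A" "\<And>x. x \<in> A \<Longrightarrow> 0 \<le> p x" "0 < c"
  shows "(\<Sum>x\<in>{x\<in>A. c < \<bar>f x\<bar>}. p x) \<le> (\<Sum>x\<in>A. p x * (f x)\<^sup>2) / c\<^sup>2"
proof -
  have "(\<Sum>x\<in>{x\<in>A. c < \<bar>f x\<bar>}. p x) \<le> (\<Sum>x\<in>{x\<in>A. c < \<bar>f x\<bar>}. p x * (f x)\<^sup>2 / c\<^sup>2)"
  proof (rule sum_mono)
    fix x assume x: "x \<in> {x\<in>A. c < \<bar>f x\<bar>}"
    have "c\<^sup>2 \<le> \<bar>f x\<bar>\<^sup>2"
      using x assms(3) by (intro power_mono) auto
    then have "1 \<le> (f x)\<^sup>2 / c\<^sup>2"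
      using assms(3) by simp
    then show "p x \<le> p x * (f x)\<^sup>2 / c\<^sup>2"
      using mult_left_mono[of 1 "(f x)\<^sup>2 / c\<^sup>2" "p x"] x assms(2) by simp
  qed
  also have "\<dots> \<le> (\<Sum>x\<in>A. p x * (f x)\<^sup>2 / c\<^sup>2)"
    using assms by (intro sum_mono2) auto
  finally show ?thesis
    by (simp add: sum_divide_distrib)
qed

lemma mem_interval_if_dist_lt:
  fixes a b T :: nat
  assumes "\<bar>real a - real b\<bar> < real T + 1"
  shows "a \<in> {b - T..b + T}"
  using assms by auto

lemma prod_fact_dvd_fact_sum: "finite A \<Longrightarrow> (\<Prod>l\<in>A. fact (m l)) dvd (fact (\<Sum>l\<in>A. m l) :: nat)"
proof (induction A rule: finite_induct)
  case (insert x A)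
  have "(\<Prod>l\<in>insert x A. fact (m l)) = fact (m x) * (\<Prod>l\<in>A. fact (m l) :: nat)"
    using insert.hyps by (rule prod.insert)
  also have "\<dots> dvd fact (m x) * fact (\<Sum>l\<in>A. m l)"
    by (rule mult_dvd_mono[OF dvd_refl insert.IH])
  also have "\<dots> dvd fact (m x + (\<Sum>l\<in>A. m l))"
    by (rule fact_fact_dvd_fact)
  also have "m x + (\<Sum>l\<in>A. m l) = (\<Sum>l\<in>insert x A. m l)"
    using insert.hyps by (rule sum.insert[symmetric])
  finally show ?case .
qed simp

lemma fact_mult_power_le: "fact u * real u ^ t \<le> (fact (u + t) :: real)"
proof (induction t)
  case (Suc t)
  have "fact u * real u ^ Suc t \<le> real (u + Suc t) * (fact u * real u ^ t)"
    by (simp add: mult_right_mono)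
  also have "\<dots> \<le> real (u + Suc t) * fact (u + t)"
    by (intro mult_left_mono Suc) auto
  finally show ?case
    by simp
qed simp

lemma fact_add_le: "fact (v + t) \<le> (fact v :: real) * (real v + real t) ^ t"
proof (induction t)
  case (Suc t)
  have "fact (v + Suc t) = (real v + real t + 1) * (fact (v + t) :: real)"
    by (simp add: algebra_simps)
  also have "\<dots> \<le> (real v + real t + 1) * (fact v * (real v + real t) ^ t)"
    by (intro mult_left_mono Suc) auto
  also have "\<dots> \<le> (real v + real t + 1) * (fact v * (real v + real t + 1) ^ t)"
    by (intro mult_left_mono power_mono) auto
  finally show ?case
    by (simp add: algebra_simps)
qed simp

text \<open>With \<open>x = q\<^sub>a\<close>, \<open>y = q\<^sub>b\<close>, \<open>m\<^sub>a = u + t\<close> and \<open>m\<^sub>b = v\<close>, this compares the factors of the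
  multinomial weight at \<open>a\<close> and \<open>b\<close> before and after moving \<open>t\<close> units from \<open>a\<close> to \<open>b\<close>.\<close>

lemma two_factor_transfer_ge:
  fixes x y :: real and u v t :: nat
  assumes "0 < x" "0 < y" "0 < u"
  shows "(y * u / (x * (v + t))) ^ t * (x ^ (u + t) / fact (u + t) * (y ^ v / fact v))
           \<le> x ^ u / fact u * (y ^ (v + t) / fact (v + t))"
proof (cases "t = 0")
  case False
  define z where "z = real (v + t)"
  have z: "0 < z"
    using False by (simp add: z_def)
  have "x ^ (u + t) / fact (u + t) \<le> x ^ (u + t) / (fact u * real u ^ t)"
    using assms by (intro divide_left_mono fact_mult_power_le) auto
  moreover have "y ^ v / fact v \<le> y ^ v * z ^ t / fact (v + t)"
    using fact_add_le[of v t] assms z by (simp add: z_def field_simps)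
  ultimately have "(y * u / (x * z)) ^ t * (x ^ (u + t) / fact (u + t) * (y ^ v / fact v))
      \<le> (y * u / (x * z)) ^ t * (x ^ (u + t) / (fact u * real u ^ t) * (y ^ v * z ^ t / fact (v + t)))"
    using assms z by (intro mult_left_mono mult_mono) auto
  also have "\<dots> = x ^ u / fact u * (y ^ (v + t) / fact (v + t))"
    using assms z by (simp add: power_divide power_mult_distrib power_add field_simps)
  finally show ?thesis
    by (simp add: z_def)
qed simp

lemma transfer_ratio_ge:
  fixes qa qb x y \<kappa> \<delta> d :: real
  assumes "0 < \<delta>" "\<delta> \<le> qa" "\<delta> \<le> qb" "0 < \<kappa>"
    and "\<bar>x - \<kappa> * qa\<bar> \<le> d" "\<bar>y - \<kappa> * qb\<bar> \<le> d" "4 * d \<le> \<delta> * \<kappa>"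
  shows "0 < x" "0 < y" "1 - 2 * d / (\<delta> * \<kappa>) \<le> qb * x / (qa * y)"
proof -
  define \<epsilon> where "\<epsilon> = d / (\<delta> * \<kappa>)"
  have \<epsilon>: "0 \<le> \<epsilon>" "\<epsilon> \<le> 1 / 4" "d = \<epsilon> * \<delta> * \<kappa>"
    using assms by (auto simp: \<epsilon>_def field_simps order_trans[OF abs_ge_zero])
  have "\<epsilon> * \<delta> * \<kappa> \<le> \<epsilon> * qa * \<kappa>" "\<epsilon> * \<delta> * \<kappa> \<le> \<epsilon> * qb * \<kappa>"
    using assms \<epsilon> by (auto intro!: mult_right_mono mult_left_mono)
  then have x: "\<kappa> * qa * (1 - \<epsilon>) \<le> x" and y: "y \<le> \<kappa> * qb * (1 + \<epsilon>)" "\<kappa> * qb * (1 - \<epsilon>) \<le> y"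
    using assms(5,6) \<epsilon>(3) by (auto simp: abs_le_iff algebra_simps)
  have pos: "0 < \<kappa> * qa * (1 - \<epsilon>)" "0 < \<kappa> * qb * (1 - \<epsilon>)"
    using assms \<epsilon> by auto
  have xy: "0 < x" "0 < y"
    using x y pos by linarith+
  then show "0 < x" "0 < y" .
  have "1 - 2 * d / (\<delta> * \<kappa>) = 1 - 2 * \<epsilon>"
    by (simp add: \<epsilon>_def)
  also have "\<dots> \<le> (1 - \<epsilon>) / (1 + \<epsilon>)"
    using \<epsilon> by (simp add: field_simps)
  also have "\<dots> = qb * (\<kappa> * qa * (1 - \<epsilon>)) / (qa * (\<kappa> * qb * (1 + \<epsilon>)))"
  proof -
    have "qb * (\<kappa> * qa * (1 - \<epsilon>)) = (\<kappa> * qa * qb) * (1 - \<epsilon>)"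
      "qa * (\<kappa> * qb * (1 + \<epsilon>)) = (\<kappa> * qa * qb) * (1 + \<epsilon>)"
      by (simp_all add: algebra_simps)
    moreover have "\<kappa> * qa * qb \<noteq> 0"
      using assms by simp
    ultimately show ?thesis
      by simp
  qed
  also have "\<dots> \<le> qb * x / (qa * y)"
  proof (rule frac_le)
    show "0 \<le> qb * x" "0 < qa * y"
      using xy assms by simp_all
    show "qb * (\<kappa> * qa * (1 - \<epsilon>)) \<le> qb * x" "qa * y \<le> qa * (\<kappa> * qb * (1 + \<epsilon>))"
      using x y assms by (simp_all add: mult_left_mono)
  qed
  finally show "1 - 2 * d / (\<delta> * \<kappa>) \<le> qb * x / (qa * y)" .
qed

lemma exp_le_one_minus_power:
  fixes e :: real
  assumes "0 \<le> e" "e \<le> 1 / 2"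
  shows "exp (- 2 * e * t) \<le> (1 - e) ^ t"
proof -
  have "e * e \<le> e * (1 / 2)"
    using assms by (intro mult_left_mono) auto
  then have "- 2 * e \<le> ln (1 - e)"
    using ln_one_minus_pos_lower_bound[OF assms] by (simp add: power2_eq_square)
  then have "real t * (- 2 * e) \<le> real t * ln (1 - e)"
    by (intro mult_left_mono) auto
  then have "exp (- 2 * e * t) \<le> exp (t * ln (1 - e))"
    by (simp add: mult_ac)
  also have "\<dots> = (1 - e) ^ t"
    using assms by (simp add: exp_of_nat_mult)
  finally show ?thesis .
qed

text \<open>The parameters of the local limit argument: counts within \<open>2K\<close> of their means,
  \<open>K = \<surd>k\<close>, and shifts \<open>t \<le> 2 r K\<close> of the total size.\<close>

lemma transfer_cost_bounds:
  fixes K \<delta> :: real and r t k :: nat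
  assumes K: "1 \<le> K" "real k = K\<^sup>2" and \<delta>: "0 < \<delta>"
    and t: "real t \<le> 2 * real r * K" and large: "8 * (real r + 1) \<le> \<delta> * K"
  shows "4 * (2 * K + t) \<le> \<delta> * k"
    and "exp (- 16 * real r * (real r + 1) / \<delta>) \<le> exp (- 4 * (2 * K + t) * t / (\<delta> * k))"
proof -
  have dt: "2 * K + t \<le> 2 * (real r + 1) * K"
    using t by (simp add: algebra_simps)
  have "4 * (2 * K + t) \<le> 8 * (real r + 1) * K"
    using dt by (simp add: algebra_simps)
  also have "\<dots> \<le> \<delta> * K * K"
    using mult_right_mono[OF large, of K] K by simp
  finally show "4 * (2 * K + t) \<le> \<delta> * k"
    using K by (simp add: power2_eq_square mult.assoc)
  have "(2 * K + t) * t \<le> (2 * (real r + 1) * K) * (2 * real r * K)"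
    by (rule mult_mono[OF dt t]) (use K in auto)
  also have "\<dots> = 4 * real r * (real r + 1) * k"
    using K by (simp add: power2_eq_square)
  finally have "4 * ((2 * K + t) * t) / (\<delta> * k) \<le> 4 * (4 * real r * (real r + 1) * k) / (\<delta> * k)"
    using \<delta> K by (intro divide_right_mono mult_left_mono) auto
  also have "\<dots> = 16 * real r * (real r + 1) / \<delta>"
    using \<delta> K by (simp add: power2_eq_square)
  finally have "4 * (2 * K + t) * t / (\<delta> * k) \<le> 16 * real r * (real r + 1) / \<delta>"
    by (simp only: mult.assoc)
  then show "exp (- 16 * real r * (real r + 1) / \<delta>) \<le> exp (- 4 * (2 * K + t) * t / (\<delta> * k))"
    by (simp only: exp_le_cancel_iff mult_minus_left divide_minus_left neg_le_iff_le)
qed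

section \<open>Multinomial distributions\<close>

locale prob_weights =
  fixes q :: "nat \<Rightarrow> real" and r :: nat
  assumes sum_weights: "(\<Sum>l=1..r. q l) = 1"
    and weights_nonneg: "0 \<le> q l"
begin

abbreviation prob :: "nat \<Rightarrow> (nat \<Rightarrow> nat) \<Rightarrow> real" where
  "prob k \<equiv> multinomial_prob q k r"

lemma prob_nonneg: "0 \<le> prob k m"
  unfolding multinomial_prob_def by (intro mult_nonneg_nonneg prod_nonneg) (auto simp: weights_nonneg)

lemma sum_prob: "(\<Sum>m\<in>weak_comps k r. prob k m) = 1"
proof (induction k)
  case 0
  then show ?case by (simp add: weak_comps_0 multinomial_prob_def)
next
  case (Suc k)
  have "Suc k * (\<Sum>m\<in>weak_comps (Suc k) r. prob (Suc k) m)
      = (\<Sum>m\<in>weak_comps (Suc k) r. prob (Suc k) m * (\<Sum>l=1..r. m l))"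
    by (simp add: sum_distrib_left mult.commute weak_comps_def)
  also have "\<dots> = (\<Sum>l=1..r. \<Sum>m\<in>weak_comps (Suc k) r. prob (Suc k) m * m l * 1)"
    by (simp add: sum_distrib_left) (rule sum.swap)
  also have "\<dots> = (\<Sum>l=1..r. Suc k * q l)"
    by (rule sum.cong) (simp_all add: multinomial_moment_shift[where h="\<lambda>_. 1", simplified] Suc)
  also have "\<dots> = Suc k"
    using sum_weights by (simp add: sum_distrib_left[symmetric])
  finally show ?case
    by simp
qed

lemma mean_count:
  assumes "j \<in> {1..r}"
  shows "(\<Sum>m\<in>weak_comps k r. prob k m * m j) = k * q j"
proof (cases k)
  case (Suc k')
  then show ?thesis
    using multinomial_moment_shift[OF assms, where k=k' and q=q and h="\<lambda>_. 1"] by (simp add: sum_prob)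
qed (simp add: weak_comps_0)

lemma second_moment_count:
  assumes "l \<in> {1..r}" "j \<in> {1..r}"
  shows "(\<Sum>m\<in>weak_comps k r. prob k m * m l * m j)
           = k * (real k - 1) * q l * q j + (if l = j then k * q l else 0)"
proof (cases k)
  case (Suc k')
  have "(\<Sum>m\<in>weak_comps k r. prob k m * m l * m j)
      = Suc k' * q l * (\<Sum>m\<in>weak_comps k' r. prob k' m * real ((m(l := m l + 1)) j))"
    using multinomial_moment_shift[OF assms(1), where k=k' and q=q and h="\<lambda>m. real (m j)"] by (simp add: Suc)
  also have "(\<Sum>m\<in>weak_comps k' r. prob k' m * real ((m(l := m l + 1)) j))
           = (\<Sum>m\<in>weak_comps k' r. prob k' m * m j + (if l = j then prob k' m else 0))"
    by (rule sum.cong) (auto simp: algebra_simps)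
  also have "\<dots> = k' * q j + (if l = j then 1 else 0)"
    by (simp add: sum.distrib mean_count[OF assms(2)] sum_prob)
  finally show ?thesis
    by (simp add: Suc algebra_simps)
qed (simp add: weak_comps_0)

lemma mean_linear:
  fixes c :: "nat \<Rightarrow> real"
  shows "(\<Sum>m\<in>weak_comps k r. prob k m * (\<Sum>l=1..r. c l * m l)) = k * (\<Sum>l=1..r. c l * q l)"
proof -
  have "(\<Sum>m\<in>weak_comps k r. prob k m * (\<Sum>l=1..r. c l * m l))
      = (\<Sum>l=1..r. c l * (\<Sum>m\<in>weak_comps k r. prob k m * m l))"
    by (simp add: sum_distrib_left algebra_simps) (rule sum.swap)
  also have "\<dots> = (\<Sum>l=1..r. c l * (k * q l))"
    by (rule sum.cong) (simp_all add: mean_count)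
  finally show ?thesis
    by (simp add: sum_distrib_left algebra_simps)
qed

lemma second_moment_linear:
  fixes c :: "nat \<Rightarrow> real"
  defines "\<mu> \<equiv> \<Sum>l=1..r. c l * q l"
  shows "(\<Sum>m\<in>weak_comps k r. prob k m * (\<Sum>l=1..r. c l * m l)\<^sup>2)
           = k * (real k - 1) * \<mu>\<^sup>2 + k * (\<Sum>l=1..r. (c l)\<^sup>2 * q l)"
proof -
  have inner: "(\<Sum>j=1..r. c l * c j * (k * (real k - 1) * q l * q j + (if l = j then k * q l else 0)))
             = k * (real k - 1) * (c l * q l) * \<mu> + k * ((c l)\<^sup>2 * q l)" if "l \<in> {1..r}" for l
  proof -
    have "(\<Sum>j=1..r. c l * c j * (k * (real k - 1) * q l * q j + (if l = j then k * q l else 0)))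
        = (\<Sum>j=1..r. k * (real k - 1) * (c l * q l) * (c j * q j) + (if l = j then k * ((c l)\<^sup>2 * q l) else 0))"
      by (rule sum.cong) (auto simp: algebra_simps power2_eq_square)
    then show ?thesis
      using that by (simp add: sum.distrib \<mu>_def sum_distrib_left)
  qed
  have "(\<Sum>m\<in>weak_comps k r. prob k m * (\<Sum>l=1..r. c l * m l)\<^sup>2)
      = (\<Sum>m\<in>weak_comps k r. \<Sum>l=1..r. \<Sum>j=1..r. c l * c j * (prob k m * m l * m j))"
    unfolding power2_eq_square sum_product by (simp add: sum_distrib_left algebra_simps)
  also have "\<dots> = (\<Sum>l=1..r. \<Sum>j=1..r. c l * c j * (\<Sum>m\<in>weak_comps k r. prob k m * m l * m j))"
    by (simp add: sum.swap[of _ "weak_comps k r"] sum_distrib_left)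
  also have "\<dots> = (\<Sum>l=1..r. \<Sum>j=1..r. c l * c j * (k * (real k - 1) * q l * q j + (if l = j then k * q l else 0)))"
    by (intro sum.cong refl) (simp add: second_moment_count)
  also have "\<dots> = (\<Sum>l=1..r. k * (real k - 1) * (c l * q l) * \<mu> + k * ((c l)\<^sup>2 * q l))"
    by (rule sum.cong[OF refl]) (rule inner)
  also have "\<dots> = k * (real k - 1) * \<mu>\<^sup>2 + k * (\<Sum>l=1..r. (c l)\<^sup>2 * q l)"
    by (simp add: sum.distrib \<mu>_def power2_eq_square sum_distrib_left[symmetric] sum_distrib_right[symmetric])
  finally show ?thesis .
qed

lemma variance_linear:
  fixes c :: "nat \<Rightarrow> real"
  defines "\<mu> \<equiv> \<Sum>l=1..r. c l * q l"
  shows "(\<Sum>m\<in>weak_comps k r. prob k m * ((\<Sum>l=1..r. c l * m l) - k * \<mu>)\<^sup>2)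
           = k * ((\<Sum>l=1..r. (c l)\<^sup>2 * q l) - \<mu>\<^sup>2)"
proof -
  define L where "L m = (\<Sum>l=1..r. c l * m l)" for m :: "nat \<Rightarrow> nat"
  have "(\<Sum>m\<in>weak_comps k r. prob k m * (L m - k * \<mu>)\<^sup>2)
      = (\<Sum>m\<in>weak_comps k r. prob k m * (L m)\<^sup>2) - 2 * k * \<mu> * (\<Sum>m\<in>weak_comps k r. prob k m * L m)
          + (k * \<mu>)\<^sup>2 * (\<Sum>m\<in>weak_comps k r. prob k m)"
    by (simp add: power2_diff algebra_simps sum.distrib sum_subtractf sum_distrib_left)
  also have "\<dots> = k * ((\<Sum>l=1..r. (c l)\<^sup>2 * q l) - \<mu>\<^sup>2)"
    unfolding L_def mean_linear second_moment_linear sum_prob \<mu>_def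
    by (simp add: power2_eq_square algebra_simps)
  finally show ?thesis
    unfolding L_def .
qed

lemma variance_count:
  assumes "j \<in> {1..r}"
  shows "(\<Sum>m\<in>weak_comps k r. prob k m * (m j - k * q j)\<^sup>2) \<le> k / 4"
proof -
  have indicator: "(\<Sum>l=1..r. (if l = j then 1 else 0) * f l) = f j" for f :: "nat \<Rightarrow> real"
  proof -
    have "(\<Sum>l=1..r. (if l = j then 1 else 0) * f l) = (\<Sum>l=1..r. if l = j then f l else 0)"
      by (rule sum.cong) auto
    then show ?thesis
      using assms by simp
  qed
  have indicator_square: "(if l = j then 1 else 0)\<^sup>2 = (if l = j then 1 else (0::real))" for l
    by simp
  have "(\<Sum>m\<in>weak_comps k r. prob k m * (m j - k * q j)\<^sup>2) = k * (q j - (q j)\<^sup>2)"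
    using variance_linear[where c="\<lambda>l. if l = j then 1 else 0" and k=k]
    unfolding indicator_square indicator .
  also have "\<dots> \<le> k * (1 / 4)"
  proof (rule mult_left_mono)
    show "q j - (q j)\<^sup>2 \<le> 1 / 4"
      using zero_le_power2[of "q j - 1 / 2"] by (simp add: power2_eq_square algebra_simps)
  qed simp
  finally show ?thesis by simp
qed

lemma variance_total_size:
  "(\<Sum>m\<in>weak_comps k r. prob k m * (total_size r m - k * (\<Sum>l=1..r. l * q l))\<^sup>2) \<le> k * r\<^sup>2"
proof -
  have "(\<Sum>m\<in>weak_comps k r. prob k m * (total_size r m - k * (\<Sum>l=1..r. l * q l))\<^sup>2)
      = k * ((\<Sum>l=1..r. (real l)\<^sup>2 * q l) - (\<Sum>l=1..r. l * q l)\<^sup>2)"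
    using variance_linear[where c=real and k=k] by simp
  also have "\<dots> \<le> k * (\<Sum>l=1..r. (real l)\<^sup>2 * q l)"
    by (intro mult_left_mono) auto
  also have "(\<Sum>l=1..r. (real l)\<^sup>2 * q l) \<le> (\<Sum>l=1..r. (real r)\<^sup>2 * q l)"
    by (intro sum_mono mult_right_mono power_mono) (auto simp: weights_nonneg)
  also have "\<dots> = (real r)\<^sup>2"
    using sum_weights by (simp add: sum_distrib_left[symmetric])
  finally show ?thesis
    by (simp add: mult_left_mono)
qed

lemma prob_count_deviation_le:
  assumes "j \<in> {1..r}" "1 \<le> k"
  shows "(\<Sum>m\<in>{m \<in> weak_comps k r. 2 * sqrt k < \<bar>m j - k * q j\<bar>}. prob k m) \<le> 1 / 16"
proof -
  have "(\<Sum>m\<in>{m \<in> weak_comps k r. 2 * sqrt k < \<bar>m j - k * q j\<bar>}. prob k m)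
          \<le> (\<Sum>m\<in>weak_comps k r. prob k m * (m j - k * q j)\<^sup>2) / (2 * sqrt k)\<^sup>2"
    using assms(2) by (intro chebyshev_sum finite_weak_comps prob_nonneg) auto
  also have "\<dots> \<le> (k / 4) / (2 * sqrt k)\<^sup>2"
    using variance_count[OF assms(1)] by (intro divide_right_mono) auto
  also have "\<dots> = 1 / 16"
    using assms(2) by (simp add: power_mult_distrib)
  finally show ?thesis .
qed

lemma prob_size_deviation_le:
  assumes "1 \<le> r" "1 \<le> k" "k * (\<Sum>l=1..r. l * q l) = n"
  shows "(\<Sum>m\<in>{m \<in> weak_comps k r. 2 * r * sqrt k < \<bar>real (total_size r m) - n\<bar>}. prob k m) \<le> 1 / 4"
proof -
  have "(\<Sum>m\<in>{m \<in> weak_comps k r. 2 * r * sqrt k < \<bar>real (total_size r m) - n\<bar>}. prob k m)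
          \<le> (\<Sum>m\<in>weak_comps k r. prob k m * (real (total_size r m) - n)\<^sup>2) / (2 * r * sqrt k)\<^sup>2"
    using assms by (intro chebyshev_sum finite_weak_comps prob_nonneg) auto
  also have "\<dots> \<le> (k * r\<^sup>2) / (2 * r * sqrt k)\<^sup>2"
    using variance_total_size[of k] assms(3) by (intro divide_right_mono) auto
  also have "\<dots> = 1 / 4"
    using assms(1,2) by (simp add: power_mult_distrib)
  finally show ?thesis .
qed

definition typical :: "nat \<Rightarrow> nat \<Rightarrow> nat \<Rightarrow> (nat \<Rightarrow> nat) set" where
  "typical k n T = {m \<in> weak_comps k r.
     \<bar>m 1 - k * q 1\<bar> \<le> 2 * sqrt k \<and> \<bar>m 2 - k * q 2\<bar> \<le> 2 * sqrt k \<and> total_size r m \<in> {n - T..n + T}}"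

lemma typical_prob_ge:
  assumes r: "2 \<le> r" and k: "1 \<le> k" and mean: "k * (\<Sum>l=1..r. l * q l) = n"
    and T: "2 * r * sqrt k < T + 1"
  shows "1 / 4 \<le> (\<Sum>m\<in>typical k n T. prob k m)"
proof -
  define bad where "bad j = {m \<in> weak_comps k r. 2 * sqrt k < \<bar>m j - k * q j\<bar>}" for j
  define bad_size where "bad_size = {m \<in> weak_comps k r. 2 * r * sqrt k < \<bar>real (total_size r m) - n\<bar>}"
  have fin: "finite (typical k n T)" "finite (bad j)" "finite bad_size" for j
    using finite_weak_comps by (auto simp: typical_def bad_def bad_size_def)
  have "weak_comps k r \<subseteq> typical k n T \<union> (bad 1 \<union> (bad 2 \<union> bad_size))"
  proof
    fix m assume m: "m \<in> weak_comps k r"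
    show "m \<in> typical k n T \<union> (bad 1 \<union> (bad 2 \<union> bad_size))"
    proof (cases "m \<in> bad_size")
      case False
      then have "total_size r m \<in> {n - T..n + T}"
        using m T by (intro mem_interval_if_dist_lt) (auto simp: bad_size_def)
      then show ?thesis
        using m by (auto simp: typical_def bad_def)
    qed simp
  qed
  then have "1 \<le> (\<Sum>m\<in>typical k n T \<union> (bad 1 \<union> (bad 2 \<union> bad_size)). prob k m)"
    using fin sum_prob[of k] by (metis sum_mono2 finite_UnI prob_nonneg)
  also have "\<dots> \<le> (\<Sum>m\<in>typical k n T. prob k m) + ((\<Sum>m\<in>bad 1. prob k m)
                   + ((\<Sum>m\<in>bad 2. prob k m) + (\<Sum>m\<in>bad_size. prob k m)))"
    using fin by (intro order.trans[OF sum_union_le] add_left_mono) (auto intro: prob_nonneg)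
  also have "\<dots> \<le> (\<Sum>m\<in>typical k n T. prob k m) + (1 / 16 + (1 / 16 + 1 / 4))"
    unfolding bad_def bad_size_def using r k mean
    by (intro add_left_mono add_mono prob_count_deviation_le prob_size_deviation_le) auto
  finally show ?thesis
    by simp
qed

lemma prob_ge_power:
  assumes q: "\<And>l. l \<in> {1..r} \<Longrightarrow> \<rho> \<le> q l" and "0 \<le> \<rho>" and m: "m \<in> weak_comps k r"
  shows "\<rho> ^ k \<le> prob k m"
proof -
  have k: "(\<Sum>l=1..r. m l) = k"
    using m unfolding weak_comps_def by blast
  have "(\<Prod>l=1..r. fact (m l)) \<le> (fact k :: nat)"
    by (rule dvd_imp_le) (use prod_fact_dvd_fact_sum[of "{1..r}" m] k in auto)
  then have "real (\<Prod>l=1..r. fact (m l)) \<le> real (fact k)"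
    by (rule of_nat_mono)
  then have coeff: "1 \<le> fact k / (\<Prod>l=1..r. fact (m l) :: real)"
    by (simp add: le_divide_eq_1_pos prod_pos)
  have "\<rho> ^ k = (\<Prod>l=1..r. \<rho> ^ m l)"
    unfolding k[symmetric] by (rule power_sum)
  also have "\<dots> \<le> (\<Prod>l=1..r. q l ^ m l)"
    using q assms(2) by (intro prod_mono power_mono conjI) auto
  also have "\<dots> \<le> (\<Prod>l=1..r. q l ^ m l) * (fact k / (\<Prod>l=1..r. fact (m l)))"
    using coeff mult_left_mono[OF coeff, of "\<Prod>l=1..r. q l ^ m l"]
    by (simp add: weights_nonneg prod_nonneg)
  also have "\<dots> = prob k m"
    by (simp add: multinomial_prob_def prod_dividef)
  finally show ?thesis .
qed

lemma prob_transfer_ge: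
  assumes ab: "a \<in> {1..r}" "b \<in> {1..r}" "a \<noteq> b" and q: "0 < q a" "0 < q b" and t: "t < m a"
  shows "(q b * real (m a - t) / (q a * (real (m b) + real t))) ^ t * prob k m \<le> prob k (transfer a b t m)"
proof -
  define u where "u = m a - t"
  define \<rho> where "\<rho> = q b * real u / (q a * real (m b + t))"
  have mau: "m a = u + t"
    using t by (simp add: u_def)
  define R where "R m' = (\<Prod>l\<in>{1..r}-{a}-{b}. q l ^ m' l / fact (m' l))" for m'
  have split: "prob k m' = fact k * (q a ^ m' a / fact (m' a) * (q b ^ m' b / fact (m' b)) * R m')" for m'
  proof -
    let ?g = "\<lambda>l. q l ^ m' l / fact (m' l)"
    have "prod ?g {1..r} = ?g a * prod ?g ({1..r} - {a})"
      by (rule prod.remove) (use ab in auto)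
    also have "prod ?g ({1..r} - {a}) = ?g b * R m'"
      unfolding R_def by (rule prod.remove) (use ab in auto)
    finally show ?thesis
      by (simp add: multinomial_prob_def mult.assoc)
  qed
  have R: "R (transfer a b t m) = R m" "0 \<le> R m"
    unfolding R_def by (auto simp: transfer_def weights_nonneg intro!: prod.cong prod_nonneg)
  have core: "\<rho> ^ t * (q a ^ (u + t) / fact (u + t) * (q b ^ m b / fact (m b)))
      \<le> q a ^ u / fact u * (q b ^ (m b + t) / fact (m b + t))"
    unfolding \<rho>_def using q t by (intro two_factor_transfer_ge) (auto simp: u_def)
  have "\<rho> ^ t * prob k m = fact k * (\<rho> ^ t * (q a ^ (u + t) / fact (u + t) * (q b ^ m b / fact (m b))) * R m)"
    by (simp add: split[of m] mau mult_ac)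
  also have "\<dots> \<le> fact k * (q a ^ u / fact u * (q b ^ (m b + t) / fact (m b + t)) * R m)"
    using core R by (intro mult_left_mono mult_right_mono) auto
  also have "\<dots> = prob k (transfer a b t m)"
    unfolding split[of "transfer a b t m"] R(1) using ab(3) by (simp add: transfer_def u_def)
  finally show ?thesis
    by (simp add: \<rho>_def u_def)
qed

lemma prob_transfer_ge_exp:
  assumes ab: "a \<in> {1..r}" "b \<in> {1..r}" "a \<noteq> b"
    and \<delta>: "0 < \<delta>" "\<delta> \<le> q a" "\<delta> \<le> q b" and k: "1 \<le> k"
    and dev: "\<bar>m a - k * q a\<bar> \<le> d" "\<bar>m b - k * q b\<bar> \<le> d" and small: "4 * (d + t) \<le> \<delta> * k"
  shows "t < m a" "exp (- 4 * (d + t) * t / (\<delta> * k)) * prob k m \<le> prob k (transfer a b t m)"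
proof -
  have "\<bar>(real (m a) - t) - k * q a\<bar> \<le> d + t" "\<bar>(real (m b) + t) - k * q b\<bar> \<le> d + t"
    using dev by auto
  note ratio = transfer_ratio_ge[OF \<delta> _ this small]
  show ta: "t < m a"
    using ratio(1) k by simp
  define e where "e = 2 * (d + t) / (\<delta> * k)"
  have e: "0 \<le> e" "e \<le> 1 / 2"
    using \<delta> k small dev by (auto simp: e_def field_simps order_trans[OF abs_ge_zero])
  have "real (m a - t) = real (m a) - t"
    using ta by simp
  then have ratio_ge: "1 - e \<le> q b * real (m a - t) / (q a * (real (m b) + real t))"
    using ratio(3) k by (simp add: e_def)
  have "exp (- 4 * (d + t) * t / (\<delta> * k)) = exp (- 2 * e * t)"
    by (simp add: e_def)
  also have "\<dots> \<le> (1 - e) ^ t"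
    by (rule exp_le_one_minus_power[OF e])
  also have "\<dots> \<le> (q b * real (m a - t) / (q a * (real (m b) + real t))) ^ t"
    by (rule power_mono[OF ratio_ge]) (use e in linarith)
  finally show "exp (- 4 * (d + t) * t / (\<delta> * k)) * prob k m \<le> prob k (transfer a b t m)"
    using prob_transfer_ge[where m=m and t=t and k=k, OF ab _ _ ta] \<delta> prob_nonneg
    by (meson less_le_trans mult_right_mono order_trans)
qed

lemma fiber_prob_le:
  assumes ab: "a \<in> {1..r}" "b \<in> {1..r}" "a \<noteq> b"
    and \<delta>: "0 < \<delta>" "\<delta> \<le> q a" "\<delta> \<le> q b" and k: "1 \<le> k" and small: "4 * (d + t) \<le> \<delta> * k"
    and G: "G \<subseteq> {m \<in> weak_comps k r. \<bar>m a - k * q a\<bar> \<le> d \<and> \<bar>m b - k * q b\<bar> \<le> d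
                                   \<and> total_size r m + b * t = n + a * t}"
  shows "exp (- 4 * (d + t) * t / (\<delta> * k)) * (\<Sum>m\<in>G. prob k m) \<le> (\<Sum>m\<in>seqs n k r. prob k m)"
proof -
  note shift = prob_transfer_ge_exp[OF ab \<delta> k _ _ small]
  have ta: "t \<le> m a" if "m \<in> G" for m
    using shift(1) that G by (blast intro: less_imp_le)
  then have inj: "inj_on (transfer a b t) G"
    by (intro inj_on_subset[OF inj_on_transfer[OF ab(3)]]) auto
  have image: "transfer a b t ` G \<subseteq> seqs n k r"
  proof (rule image_subsetI)
    fix m assume "m \<in> G"
    then show "transfer a b t m \<in> seqs n k r"
      using ta G total_size_transfer[OF ab] transfer_in_weak_comps[OF ab]
      unfolding seqs_eq by fastforce
  qed
  have "exp (- 4 * (d + t) * t / (\<delta> * k)) * (\<Sum>m\<in>G. prob k m)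
      = (\<Sum>m\<in>G. exp (- 4 * (d + t) * t / (\<delta> * k)) * prob k m)"
    by (simp add: sum_distrib_left)
  also have "\<dots> \<le> (\<Sum>m\<in>G. prob k (transfer a b t m))"
    using G shift(2) by (intro sum_mono) blast
  also have "\<dots> = (\<Sum>m\<in>transfer a b t ` G. prob k m)"
    by (simp add: sum.reindex[OF inj])
  also have "\<dots> \<le> (\<Sum>m\<in>seqs n k r. prob k m)"
    using image by (intro sum_mono2 finite_seqs prob_nonneg)
  finally show ?thesis .
qed

lemma typical_fiber_prob_le:
  assumes r: "2 \<le> r" and \<delta>: "0 < \<delta>" "\<delta> \<le> q 1" "\<delta> \<le> q 2" and k: "1 \<le> k"
    and large: "8 * (real r + 1) \<le> \<delta> * sqrt k" and T: "real T \<le> 2 * real r * sqrt k"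
    and j: "j \<in> {n - T..n + T}"
  shows "exp (- 16 * real r * (real r + 1) / \<delta>) * (\<Sum>m\<in>{m \<in> typical k n T. total_size r m = j}. prob k m)
           \<le> (\<Sum>m\<in>seqs n k r. prob k m)"
proof -
  define K where "K = sqrt k"
  have K: "1 \<le> K" "real k = K\<^sup>2"
    using k by (auto simp: K_def)
  have large': "8 * (real r + 1) \<le> \<delta> * K"
    using large by (simp add: K_def)
  have fiber_le: ?thesis
    if ab: "{a, b} = {1, 2}" "a \<noteq> b" and t: "t \<le> T"
      and shift: "\<And>m. total_size r m = j \<Longrightarrow> total_size r m + b * t = n + a * t" for a b t
  proof -
    have ab': "a \<in> {1..r}" "b \<in> {1..r}" "\<delta> \<le> q a" "\<delta> \<le> q b"
      using ab r \<delta> by (auto simp: doubleton_eq_iff)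
    have "real t \<le> 2 * real r * K"
      using T t by (simp add: K_def order_trans)
    note cost = transfer_cost_bounds[OF K \<delta>(1) this large']
    have "{m \<in> typical k n T. total_size r m = j}
            \<subseteq> {m \<in> weak_comps k r. \<bar>m a - k * q a\<bar> \<le> 2 * K \<and> \<bar>m b - k * q b\<bar> \<le> 2 * K
                                   \<and> total_size r m + b * t = n + a * t}"
      using ab shift by (auto simp: typical_def K_def doubleton_eq_iff)
    note fiber_prob_le[OF ab'(1,2) ab(2) \<delta>(1) ab'(3,4) k cost(1) this]
    with cost(2) show ?thesis
      by (meson mult_right_mono order_trans sum_nonneg prob_nonneg)
  qed
  show ?thesis
  proof (cases "j \<le> n")
    case True
    show ?thesis
      by (rule fiber_le[of 1 2 "n - j"]) (use j True in auto)
  next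
    case False
    show ?thesis
      by (rule fiber_le[of 2 1 "j - n"]) (use j False in auto)
  qed
qed

lemma prob_seqs_ge:
  assumes r: "2 \<le> r" and \<delta>: "0 < \<delta>" "\<delta> \<le> q 1" "\<delta> \<le> q 2" and k: "1 \<le> k"
    and mean: "k * (\<Sum>l=1..r. l * q l) = n" and large: "8 * (real r + 1) \<le> \<delta> * sqrt k"
  shows "exp (- 16 * real r * (real r + 1) / \<delta>) / (24 * real r * sqrt k) \<le> (\<Sum>m\<in>seqs n k r. prob k m)"
proof -
  define K where "K = sqrt k"
  define T where "T = nat \<lfloor>2 * real r * K\<rfloor>"
  define \<gamma> where "\<gamma> = exp (- 16 * real r * (real r + 1) / \<delta>)"
  define g where "g = (\<Sum>m\<in>seqs n k r. prob k m)"
  have K: "1 \<le> K"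
    using k by (auto simp: K_def)
  then have "0 \<le> 2 * real r * K"
    by simp
  then have T: "real T \<le> 2 * real r * K" "2 * real r * K < real T + 1"
    unfolding T_def by linarith+
  have "0 < \<gamma>" "0 \<le> g"
    by (auto simp: \<gamma>_def g_def intro: sum_nonneg prob_nonneg)
  have "1 / 4 \<le> (\<Sum>m\<in>typical k n T. prob k m)"
    using typical_prob_ge[OF r k mean] T by (simp add: K_def)
  also have "\<dots> = (\<Sum>j\<in>{n - T..n + T}. \<Sum>m\<in>{m \<in> typical k n T. total_size r m = j}. prob k m)"
    using finite_weak_comps by (intro sum.group[symmetric]) (auto simp: typical_def)
  also have "\<dots> \<le> (\<Sum>j\<in>{n - T..n + T}. g / \<gamma>)"
    using typical_fiber_prob_le[OF r \<delta> k large] T(1) \<open>0 < \<gamma>\<close>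
    by (intro sum_mono) (simp add: K_def \<gamma>_def g_def field_simps mult.commute)
  also have "\<dots> = card {n - T..n + T} * (g / \<gamma>)"
    by simp
  also have "\<dots> \<le> (2 * real T + 1) * (g / \<gamma>)"
  proof (rule mult_right_mono)
    have "card {n - T..n + T} \<le> 2 * T + 1"
      by simp
    then show "real (card {n - T..n + T}) \<le> 2 * real T + 1"
      by linarith
  qed (use \<open>0 < \<gamma>\<close> \<open>0 \<le> g\<close> in simp)
  finally have "1 / 4 \<le> (2 * real T + 1) * g / \<gamma>"
    by simp
  then have "\<gamma> \<le> 4 * (2 * real T + 1) * g"
    using \<open>0 < \<gamma>\<close> by (simp add: le_divide_eq algebra_simps)
  also have "\<dots> \<le> 24 * real r * K * g"
  proof (intro mult_right_mono)
    have "4 * 1 \<le> 2 * real r * K"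
      using r K by (intro mult_mono) auto
    then show "4 * (2 * real T + 1) \<le> 24 * real r * K"
      using T(1) by (simp add: algebra_simps)
  qed (use \<open>0 \<le> g\<close> in simp)
  finally show ?thesis
    using r K unfolding \<gamma>_def[symmetric] g_def[symmetric] K_def[symmetric]
    by (simp add: pos_divide_le_eq mult.commute)
qed

end

section \<open>The tilted size distribution\<close>

definition tilt :: "nat \<Rightarrow> real \<Rightarrow> nat \<Rightarrow> real" where
  "tilt r s l = trees l * s ^ l / fact l / F r s"

lemma trees_nonneg: "0 \<le> trees l"
  by (simp add: trees_def)

lemma F_ge:
  assumes "1 \<le> r" "0 \<le> s"
  shows "s \<le> F r s"
proof -
  have "trees 1 * s ^ 1 / fact 1 \<le> F r s"
    unfolding F_def using assms by (intro member_le_sum) (auto simp: trees_nonneg)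
  then show ?thesis
    by (simp add: trees_def)
qed

lemma F_pos: "1 \<le> r \<Longrightarrow> 0 < s \<Longrightarrow> 0 < F r s"
  using F_ge[of r s] by linarith

lemma F_mono: "0 < s \<Longrightarrow> s \<le> s' \<Longrightarrow> F r s \<le> F r s'"
  unfolding F_def by (intro sum_mono divide_right_mono mult_left_mono power_mono) (auto simp: trees_nonneg)

lemma prob_weights_tilt:
  assumes "1 \<le> r" "0 < s"
  shows "prob_weights (tilt r s) r"
proof
  have "(\<Sum>l=1..r. tilt r s l) = F r s / F r s"
    by (simp only: tilt_def F_def sum_divide_distrib[symmetric])
  then show "(\<Sum>l=1..r. tilt r s l) = 1"
    using F_pos[OF assms] by simp
  show "0 \<le> tilt r s l" for l
    using F_pos[OF assms] assms by (simp add: tilt_def trees_nonneg)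
qed

lemma multinomial_prob_tilt:
  assumes "m \<in> seqs n k r"
  shows "multinomial_prob (tilt r s) k r m
           = fact k * s ^ n / F r s ^ k * (\<Prod>l=1..r. (trees l / fact l) ^ m l / fact (m l))"
proof -
  have n: "total_size r m = n" and k: "(\<Sum>l=1..r. m l) = k"
    using assms by (auto simp: seqs_def)
  have "(\<Prod>l=1..r. tilt r s l ^ m l / fact (m l))
      = (\<Prod>l=1..r. (trees l / fact l) ^ m l / fact (m l) * s ^ (l * m l) / F r s ^ m l)"
    by (rule prod.cong) (simp_all add: tilt_def power_divide power_mult_distrib power_mult)
  also have "\<dots> = (\<Prod>l=1..r. (trees l / fact l) ^ m l / fact (m l)) * s ^ n / F r s ^ k"
    by (simp add: prod.distrib prod_dividef power_sum flip: n k)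
  finally show ?thesis
    by (simp add: multinomial_prob_def)
qed

lemma sum_prob_tilt_seqs:
  "(\<Sum>m\<in>seqs n k r. multinomial_prob (tilt r s) k r m) = fact k * s ^ n / F r s ^ k * Q n k r"
  unfolding Q_def by (simp add: multinomial_prob_tilt sum_distrib_left)

lemma Q_nonneg: "0 \<le> Q n k r"
  unfolding Q_def by (intro sum_nonneg prod_nonneg divide_nonneg_nonneg zero_le_power) (auto simp: trees_nonneg)

lemma Q_le_tilted:
  assumes "1 \<le> r" "0 < s"
  shows "Q n k r \<le> F r s ^ k / s ^ n / fact k"
proof -
  interpret prob_weights "tilt r s" r
    using assms by (rule prob_weights_tilt)
  have "fact k * s ^ n / F r s ^ k * Q n k r \<le> 1"
    unfolding sum_prob_tilt_seqs[symmetric] sum_prob[of k, symmetric] seqs_eq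
    by (intro sum_mono2 finite_weak_comps prob_nonneg) auto
  moreover have pos: "0 < F r s ^ k" "0 < s ^ n"
    using F_pos[OF assms] assms by auto
  ultimately have "(fact k * s ^ n / F r s ^ k * Q n k r) * (F r s ^ k / s ^ n / fact k)
                     \<le> 1 * (F r s ^ k / s ^ n / fact k)"
    by (intro mult_right_mono) auto
  then show ?thesis
    using F_pos[OF assms] assms by (simp add: field_simps)
qed

lemma Q_le_bound:
  assumes "1 \<le> r"
  shows "Q n k r \<le> bound n k r"
proof -
  have "Q n k r * fact k \<le> (INF s\<in>{0<..}. F r s ^ k / s ^ n)"
    using Q_le_tilted[OF assms] by (intro cINF_greatest) (auto simp: field_simps)
  then show ?thesis
    unfolding bound_def by (simp add: field_simps)
qed

lemma bound_nonneg: "1 \<le> r \<Longrightarrow> 0 \<le> bound n k r"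
  using Q_le_bound Q_nonneg order_trans by blast

lemma bound_le_tilted:
  assumes "1 \<le> r" "0 < s"
  shows "bound n k r \<le> F r s ^ k / s ^ n / fact k"
proof -
  have "bdd_below ((\<lambda>s. F r s ^ k / s ^ n) ` {0<..})"
    using F_pos[OF assms(1)] by (intro bdd_belowI[of _ 0]) (auto intro!: divide_nonneg_nonneg simp: less_imp_le)
  then have "(INF s\<in>{0<..}. F r s ^ k / s ^ n) \<le> F r s ^ k / s ^ n"
    using assms by (intro cINF_lower) auto
  then show ?thesis
    unfolding bound_def by (simp add: field_simps)
qed

lemma Q_ge_prob_bound:
  assumes "1 \<le> r" "0 < s" "0 \<le> p" "p \<le> (\<Sum>m\<in>seqs n k r. multinomial_prob (tilt r s) k r m)"
  shows "p * bound n k r \<le> Q n k r"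
proof -
  have pos: "0 < F r s ^ k" "0 < s ^ n"
    using F_pos[OF assms(1,2)] assms by auto
  have "p * bound n k r \<le> p * (F r s ^ k / s ^ n / fact k)"
    using assms by (intro mult_left_mono bound_le_tilted) auto
  also have "\<dots> \<le> fact k * s ^ n / F r s ^ k * Q n k r * (F r s ^ k / s ^ n / fact k)"
    using assms pos by (intro mult_right_mono) (auto simp: sum_prob_tilt_seqs)
  also have "\<dots> = Q n k r"
    using F_pos[OF assms(1,2)] assms(2) by (simp add: field_simps)
  finally show ?thesis .
qed

section \<open>Saddle points\<close>

definition mean_size :: "nat \<Rightarrow> real \<Rightarrow> real" where
  "mean_size r s = (\<Sum>l=1..r. l * tilt r s l)"

lemma mean_size_eq_ratio:
  "mean_size r s = (\<Sum>l=1..r. l * (trees l * s ^ l / fact l)) / F r s"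
  unfolding mean_size_def tilt_def F_def by (simp add: sum_divide_distrib)

lemma continuous_on_mean_size:
  assumes "1 \<le> r" "0 < a"
  shows "continuous_on {a..b} (mean_size r)"
proof -
  have "continuous_on {a..b} (\<lambda>s. (\<Sum>l=1..r. l * (trees l * s ^ l / fact l)) / (\<Sum>l=1..r. trees l * s ^ l / fact l))"
    using F_pos[OF assms(1)] assms(2) unfolding F_def
    by (intro continuous_intros) (auto intro!: less_imp_neq[symmetric])
  then show ?thesis
    unfolding mean_size_eq_ratio[abs_def] F_def .
qed

text \<open>Divided by \<open>s\<close>, resp. by \<open>s\<^sup>r\<close> and written in \<open>u = 1/s\<close>, numerator and denominator of
  \<^const>\<open>mean_size\<close> become polynomials that do not vanish at 0.\<close>

lemma mean_size_at_right_0: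
  assumes "1 \<le> r"
  shows "(mean_size r \<longlongrightarrow> 1) (at_right 0)"
proof -
  define num where "num s = (\<Sum>l=1..r. l * (trees l * s ^ (l - 1) / fact l))" for s :: real
  define den where "den s = (\<Sum>l=1..r. trees l * s ^ (l - 1) / fact l)" for s :: real
  have at_0: "num 0 = 1" "den 0 = 1"
    using assms by (auto simp: num_def den_def sum.atLeast_Suc_atMost trees_def intro!: sum.neutral)
  have "isCont (\<lambda>s. num s / den s) 0"
    using at_0 unfolding num_def den_def by (intro continuous_intros) auto
  then have "((\<lambda>s. num s / den s) \<longlongrightarrow> 1) (at_right 0)"
    using at_0 by (auto simp: isCont_def intro: tendsto_within_subset)
  moreover have "\<forall>\<^sub>F s in at_right 0. num s / den s = mean_size r s"
  proof (rule eventually_at_rightI[of 0 1])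
    fix s :: real assume "s \<in> {0<..<1}"
    then have s: "0 < s" by simp
    have "s ^ l = s * s ^ (l - 1)" if "1 \<le> l" for l
      using that by (simp add: power_eq_if)
    then have "(\<Sum>l=1..r. l * (trees l * s ^ l / fact l)) = s * num s" "F r s = s * den s"
      by (simp_all add: num_def den_def F_def sum_distrib_left algebra_simps)
    then show "num s / den s = mean_size r s"
      using s by (simp add: mean_size_eq_ratio)
  qed simp
  ultimately show ?thesis
    by (rule Lim_transform_eventually)
qed

lemma mean_size_at_top:
  assumes "1 \<le> r"
  shows "(mean_size r \<longlongrightarrow> real r) at_top"
proof -
  define num where "num u = (\<Sum>l=1..r. u ^ (r - l) * (l * trees l / fact l))" for u :: real
  define den where "den u = (\<Sum>l=1..r. u ^ (r - l) * (trees l / fact l))" for u :: real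
  have at_0: "num 0 = r * (real r ^ (r - 2) / fact r)" "den 0 = real r ^ (r - 2) / fact r"
    using assms by (auto simp: num_def den_def sum.last_plus trees_def intro!: sum.neutral)
  have den_0: "den 0 \<noteq> 0"
    using assms by (simp add: at_0)
  have "isCont (\<lambda>u. num u / den u) 0"
    using den_0 unfolding num_def den_def by (intro continuous_intros) auto
  then have "((\<lambda>u. num u / den u) \<longlongrightarrow> r) (at_right 0)"
    using at_0 den_0 by (auto simp: isCont_def intro: tendsto_within_subset)
  then have "((\<lambda>s. num (inverse s) / den (inverse s)) \<longlongrightarrow> r) at_top"
    by (rule filterlim_compose[OF _ filterlim_inverse_at_right_top])
  moreover have "\<forall>\<^sub>F s in at_top. num (inverse s) / den (inverse s) = mean_size r s"
  proof (rule eventually_at_top_linorderI[of 1])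
    fix s :: real assume "1 \<le> s"
    then have s: "0 < s" by simp
    have shift: "s ^ r * (inverse s ^ (r - l) * c) = s ^ l * c" if "l \<in> {1..r}" for l c
    proof -
      have "s ^ r = s ^ l * s ^ (r - l)"
        using that by (simp flip: power_add)
      moreover have "s ^ (r - l) * inverse s ^ (r - l) = 1"
        using s by (simp add: power_inverse)
      ultimately show ?thesis
        by (metis mult.assoc mult.right_neutral)
    qed
    have eqs: "s ^ r * num (inverse s) = (\<Sum>l=1..r. l * (trees l * s ^ l / fact l))"
      "s ^ r * den (inverse s) = F r s"
      unfolding num_def den_def F_def sum_distrib_left by (auto intro!: sum.cong simp: shift)
    show "num (inverse s) / den (inverse s) = mean_size r s"
      unfolding mean_size_eq_ratio eqs[symmetric] using s by simp
  qed
  ultimately show ?thesis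
    by (rule Lim_transform_eventually)
qed

lemma saddle_point_between:
  fixes \<eta> :: real
  assumes r: "1 \<le> r" and \<eta>: "0 < \<eta>" and slo: "0 < slo" "slo \<le> shi"
    and bounds: "mean_size r slo < 1 + \<eta>" "r / (1 + \<eta>) < mean_size r shi"
    and k: "1 \<le> k" "real k < (1 - \<eta>) * real n" "real n * (1 + \<eta>) < real r * real k"
  shows "\<exists>s\<in>{slo..shi}. real k * mean_size r s = real n"
proof -
  have "(1 + \<eta>) * k < (1 + \<eta>) * ((1 - \<eta>) * n)"
    using k \<eta> by (intro mult_strict_left_mono) auto
  also have "\<dots> \<le> n"
    using \<eta> by (simp add: algebra_simps)
  finally have "(1 + \<eta>) * k < n" .
  moreover have "mean_size r slo * k \<le> (1 + \<eta>) * k"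
    using bounds(1) by (intro mult_right_mono) auto
  ultimately have "mean_size r slo * k \<le> n"
    by linarith
  then have "mean_size r slo \<le> n / k"
    using k by (simp add: pos_le_divide_eq)
  moreover have "n / k \<le> mean_size r shi"
  proof -
    have "n < r / (1 + \<eta>) * k"
      using k(3) \<eta> by (simp add: field_simps)
    also have "\<dots> < mean_size r shi * k"
      using bounds(2) k by (intro mult_strict_right_mono) auto
    finally show ?thesis
      using k by (simp add: pos_divide_le_eq)
  qed
  ultimately obtain s where s: "slo \<le> s" "s \<le> shi" "mean_size r s = n / k"
    using IVT'[OF _ _ slo(2) continuous_on_mean_size[OF r slo(1)]] by blast
  then show ?thesis
    using k by (intro bexI[of _ s]) auto
qed

lemma saddle_points_bounded:
  fixes \<eta> :: real
  assumes r: "2 \<le> r" and \<eta>: "0 < \<eta>"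
  obtains slo shi where "0 < slo" "slo \<le> shi"
    "\<And>(n :: nat) (k :: nat). 1 \<le> k \<Longrightarrow> real k < (1 - \<eta>) * real n
       \<Longrightarrow> real n * (1 + \<eta>) < real r * real k \<Longrightarrow> \<exists>s\<in>{slo..shi}. real k * mean_size r s = real n"
proof -
  have "\<forall>\<^sub>F s in at_right 0. mean_size r s < 1 + \<eta>"
    using r \<eta> by (intro order_tendstoD(2)[OF mean_size_at_right_0]) auto
  then obtain b where b: "0 < b" "\<And>s. 0 < s \<Longrightarrow> s < b \<Longrightarrow> mean_size r s < 1 + \<eta>"
    by (auto simp: eventually_at_right_field)
  have "\<forall>\<^sub>F s in at_top. r / (1 + \<eta>) < mean_size r s"
    using r \<eta> by (intro order_tendstoD(1)[OF mean_size_at_top]) (auto simp: field_simps)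
  then obtain N where N: "\<And>s. N \<le> s \<Longrightarrow> r / (1 + \<eta>) < mean_size r s"
    by (auto simp: eventually_at_top_linorder)
  have sl: "0 < b / 2" "b / 2 \<le> max (b / 2) N" "mean_size r (b / 2) < 1 + \<eta>"
    "r / (1 + \<eta>) < mean_size r (max (b / 2) N)"
    using b N by auto
  show ?thesis
    by (rule that[OF sl(1,2)], rule saddle_point_between[OF _ \<eta> sl]) (use r in auto)
qed

lemma tilt_1_ge:
  assumes "1 \<le> r" "0 < slo" "slo \<le> s" "s \<le> shi"
  shows "slo / F r shi \<le> tilt r s 1"
proof -
  have "slo / F r shi \<le> s / F r s"
    using F_pos[OF assms(1)] F_mono[of s shi r] assms by (intro frac_le) auto
  then show ?thesis
    by (simp add: tilt_def trees_def)
qed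

lemma tilt_2_ge:
  assumes "1 \<le> r" "0 < slo" "slo \<le> s" "s \<le> shi"
  shows "slo\<^sup>2 / 2 / F r shi \<le> tilt r s 2"
proof -
  have "slo\<^sup>2 / 2 / F r shi \<le> s\<^sup>2 / 2 / F r s"
    using F_pos[OF assms(1)] F_mono[of s shi r] assms
    by (intro frac_le divide_right_mono power_mono) auto
  then show ?thesis
    by (simp add: tilt_def trees_def)
qed

lemma Q_ge_small_k:
  assumes r: "1 \<le> r" and kn: "k \<le> n" "n \<le> r * k"
  shows "(1 / (fact r * F r 1)) ^ k * bound n k r \<le> Q n k r"
proof -
  interpret prob_weights "tilt r 1" r
    using r by (rule prob_weights_tilt) simp
  define \<rho> :: real where "\<rho> = 1 / (fact r * F r 1)"
  have F1: "0 < F r 1"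
    using F_pos[OF r] by simp
  have \<rho>: "0 \<le> \<rho>"
    using F1 by (simp add: \<rho>_def)
  have \<rho>_le: "\<rho> \<le> tilt r 1 l" if "l \<in> {1..r}" for l
  proof -
    have "1 / fact r \<le> trees l / fact l"
      using that by (intro frac_le fact_mono) (auto simp: trees_def)
    then show ?thesis
      using F1 by (simp add: \<rho>_def tilt_def divide_right_mono flip: divide_divide_eq_left)
  qed
  obtain m where m: "m \<in> seqs n k r"
    using seqs_nonempty[OF r kn] by blast
  have "\<rho> ^ k \<le> prob k m"
    using m \<rho> \<rho>_le by (intro prob_ge_power) (auto simp: seqs_eq)
  also have "\<dots> \<le> (\<Sum>m\<in>seqs n k r. prob k m)"
    using m by (intro member_le_sum finite_seqs prob_nonneg)
  finally show ?thesis
    unfolding \<rho>_def[symmetric] using r \<rho> by (intro Q_ge_prob_bound[of r 1]) auto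
qed

lemma Q_ge_bounded_k:
  assumes r: "1 \<le> r" and kn: "k \<le> n" "n \<le> r * k" and "k \<le> k0"
  shows "(1 / (fact r * F r 1)) ^ k0 * bound n k r \<le> Q n k r"
proof -
  have "1 * 1 \<le> fact r * F r 1"
    using F_ge[OF r, of 1] by (intro mult_mono) (auto simp: fact_ge_1)
  then have "(1 / (fact r * F r 1)) ^ k0 \<le> (1 / (fact r * F r 1)) ^ k"
    using assms(4) by (intro power_decreasing) auto
  then have "(1 / (fact r * F r 1)) ^ k0 * bound n k r \<le> (1 / (fact r * F r 1)) ^ k * bound n k r"
    using bound_nonneg[OF r] by (rule mult_right_mono)
  also have "\<dots> \<le> Q n k r"
    using r kn by (rule Q_ge_small_k)
  finally show ?thesis .
qed

lemma Q_ge_large_k: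
  assumes r: "2 \<le> r" and s: "0 < s" and \<delta>: "0 < \<delta>" "\<delta> \<le> tilt r s 1" "\<delta> \<le> tilt r s 2"
    and k: "1 \<le> k" "k \<le> n" and mean: "k * mean_size r s = n"
    and large: "8 * (real r + 1) \<le> \<delta> * sqrt k"
  shows "exp (- 16 * real r * (real r + 1) / \<delta>) / (24 * real r) / sqrt n * bound n k r \<le> Q n k r"
proof -
  interpret prob_weights "tilt r s" r
    using r s by (intro prob_weights_tilt) auto
  have "exp (- 16 * real r * (real r + 1) / \<delta>) / (24 * real r) / sqrt n
          \<le> exp (- 16 * real r * (real r + 1) / \<delta>) / (24 * real r * sqrt k)"
    using r k by (auto intro!: divide_left_mono mult_pos_pos simp: divide_divide_eq_left)
  also have "\<dots> \<le> (\<Sum>m\<in>seqs n k r. prob k m)"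
    using mean by (intro prob_seqs_ge r \<delta> k(1) large) (simp add: mean_size_def)
  finally show ?thesis
    using r s by (intro Q_ge_prob_bound) auto
qed

lemma range_of_k:
  fixes \<eta> :: real
  assumes "0 < \<eta>" "real k < (1 - \<eta>) * real n" "real n * (1 + \<eta>) < real r * real k"
  shows "k \<le> n" "n \<le> r * k"
proof -
  have "0 \<le> \<eta> * n"
    using assms(1) by simp
  then have "real k < n" "real n < real r * real k"
    using assms(2,3) by (auto simp: algebra_simps)
  then have "k < n" "n < r * k"
    by (simp_all only: of_nat_less_iff of_nat_mult[symmetric])
  then show "k \<le> n" "n \<le> r * k"
    by simp_all
qed

lemma Q_lower_bound_large_k:
  fixes \<eta> :: real
  assumes r: "2 \<le> r" and \<eta>: "0 < \<eta>"
  obtains c kmin where "0 < c"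
    "\<And>(n :: nat) (k :: nat). kmin \<le> k \<Longrightarrow> 1 \<le> k \<Longrightarrow> real k < (1 - \<eta>) * real n
       \<Longrightarrow> real n * (1 + \<eta>) < real r * real k \<Longrightarrow> c / sqrt n * bound n k r \<le> Q n k r"
proof -
  obtain slo shi where slo: "0 < slo" "slo \<le> shi"
    and saddle: "\<And>(n :: nat) (k :: nat). 1 \<le> k \<Longrightarrow> real k < (1 - \<eta>) * real n
       \<Longrightarrow> real n * (1 + \<eta>) < real r * real k \<Longrightarrow> \<exists>s\<in>{slo..shi}. real k * mean_size r s = real n"
    using saddle_points_bounded[OF r \<eta>] by blast
  define \<delta> where "\<delta> = min (slo / F r shi) (slo\<^sup>2 / 2 / F r shi)"
  have r1: "1 \<le> r"
    using r by simp
  have \<delta>: "0 < \<delta>"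
    using slo F_pos[OF r1, of shi] by (simp add: \<delta>_def)
  show thesis
  proof (rule that[where kmin = "nat \<lceil>(8 * (real r + 1) / \<delta>)\<^sup>2\<rceil>"
                     and c = "exp (- 16 * real r * (real r + 1) / \<delta>) / (24 * real r)"])
    show "0 < exp (- 16 * real r * (real r + 1) / \<delta>) / (24 * real r)"
      using r by simp
  next
    fix n k :: nat
    assume kmin: "nat \<lceil>(8 * (real r + 1) / \<delta>)\<^sup>2\<rceil> \<le> k"
      and k: "1 \<le> k" "real k < (1 - \<eta>) * real n" "real n * (1 + \<eta>) < real r * real k"
    have "(8 * (real r + 1) / \<delta>)\<^sup>2 \<le> k"
      using kmin by linarith
    then have "8 * (real r + 1) / \<delta> \<le> sqrt k"
      by (rule real_le_rsqrt)
    then have large: "8 * (real r + 1) \<le> \<delta> * sqrt k"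
      using \<delta> by (simp add: field_simps)
    obtain s where s: "slo \<le> s" "s \<le> shi" "k * mean_size r s = n"
      using saddle[OF k] by auto
    have "\<delta> \<le> tilt r s 1" "\<delta> \<le> tilt r s 2"
      using tilt_1_ge[OF r1 slo(1) s(1,2)] tilt_2_ge[OF r1 slo(1) s(1,2)] by (auto simp: \<delta>_def)
    then show "exp (- 16 * real r * (real r + 1) / \<delta>) / (24 * real r) / sqrt n * bound n k r \<le> Q n k r"
      using r s slo \<delta> k(1) range_of_k[OF \<eta> k(2,3)] large by (intro Q_ge_large_k) auto
  qed
qed

lemma Q_lower_bound_fixed_r:
  fixes \<eta> :: real
  assumes r: "2 \<le> r" and \<eta>: "0 < \<eta>"
  shows "\<exists>c>0. \<forall>n k. 1 \<le> k \<and> real k < (1 - \<eta>) * real n \<and> real n * (1 + \<eta>) < real r * real k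
                    \<longrightarrow> c / sqrt n * bound n k r \<le> Q n k r"
proof -
  obtain c0 k0 where c0: "0 < c0"
    and large: "\<And>(n :: nat) (k :: nat). k0 \<le> k \<Longrightarrow> 1 \<le> k \<Longrightarrow> real k < (1 - \<eta>) * real n
       \<Longrightarrow> real n * (1 + \<eta>) < real r * real k \<Longrightarrow> c0 / sqrt n * bound n k r \<le> Q n k r"
    by (rule Q_lower_bound_large_k[OF r \<eta>]) blast
  define c where "c = min c0 ((1 / (fact r * F r 1)) ^ k0)"
  have r1: "1 \<le> r"
    using r by simp
  have "0 < c"
    using c0 F_pos[OF r1, of 1] by (simp add: c_def)
  moreover have "c / sqrt n * bound n k r \<le> Q n k r"
    if k: "1 \<le> k" "real k < (1 - \<eta>) * real n" "real n * (1 + \<eta>) < real r * real k" for n k :: nat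
  proof (cases "k0 \<le> k")
    case True
    have "c / sqrt n * bound n k r \<le> c0 / sqrt n * bound n k r"
      using bound_nonneg[OF r1] by (intro mult_right_mono divide_right_mono) (auto simp: c_def)
    also have "\<dots> \<le> Q n k r"
      using True k by (rule large)
    finally show ?thesis .
  next
    case False
    note kn = range_of_k[OF \<eta> k(2,3)]
    have "c / sqrt n \<le> c / 1"
      using \<open>0 < c\<close> kn k(1) by (intro divide_left_mono) auto
    also have "\<dots> \<le> (1 / (fact r * F r 1)) ^ k0"
      by (simp add: c_def)
    finally have "c / sqrt n * bound n k r \<le> (1 / (fact r * F r 1)) ^ k0 * bound n k r"
      using bound_nonneg[OF r1] by (rule mult_right_mono)
    also have "\<dots> \<le> Q n k r"
      using r1 kn False by (intro Q_ge_bounded_k) auto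
    finally show ?thesis .
  qed
  ultimately show ?thesis
    by blast
qed

lemma Q_lower_bound_uniform:
  fixes \<eta> :: real
  assumes \<eta>: "0 < \<eta>"
  shows "\<exists>c. (\<forall>r\<ge>1. 0 < c r) \<and> (\<forall>n k r. 1 \<le> k \<and> 2 \<le> r \<and> real k < (1 - \<eta>) * real n
            \<and> real n * (1 + \<eta>) < real r * real k \<longrightarrow> c r / sqrt n * bound n k r \<le> Q n k r)"
proof -
  have "\<forall>r. \<exists>c. 2 \<le> r \<longrightarrow> 0 < c \<and> (\<forall>n k. 1 \<le> k \<and> real k < (1 - \<eta>) * real n
                 \<and> real n * (1 + \<eta>) < real r * real k \<longrightarrow> c / sqrt n * bound n k r \<le> Q n k r)"
    using Q_lower_bound_fixed_r[OF _ \<eta>] by auto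
  from choice[OF this] obtain c where c: "\<forall>r. 2 \<le> r \<longrightarrow> 0 < c r \<and> (\<forall>n k. 1 \<le> k \<and> real k < (1 - \<eta>) * real n
                 \<and> real n * (1 + \<eta>) < real r * real k \<longrightarrow> c r / sqrt n * bound n k r \<le> Q n k r)"
    by blast
  show ?thesis
    by (rule exI[of _ "\<lambda>r. if 2 \<le> r then c r else 1"]) (use c in auto)
qed

theorem proposition4p1:
  shows "(\<forall>n k r. n \<ge> 1 \<and> k \<ge> 1 \<and> r \<ge> 1 \<longrightarrow> Q n k r \<le> bound n k r)
    \<and> (\<forall>\<eta>::real. \<eta> > 0 \<longrightarrow>
         (\<exists>n0::nat. \<exists>c::nat \<Rightarrow> real. (\<forall>r\<ge>1. c r > 0) \<and>
            (\<forall>n k r. n \<ge> n0 \<and> k \<ge> 1 \<and> r \<ge> 2 \<and>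
                 real k < (1 - \<eta>) * real n \<and> real r * real k > real n * (1 + \<eta>)
               \<longrightarrow> Q n k r \<ge> c r / sqrt (real n) * bound n k r)))"
proof (intro conjI allI impI, goal_cases)
  case (1 n k r)
  then show ?case
    by (intro Q_le_bound) auto
next
  case (2 \<eta>)
  then show ?case
    using Q_lower_bound_uniform by (intro exI[of _ 0]) auto
qed

end
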